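(* Let $\{X_n\}$ be the Bessel-like walk of the context. There exists a constant $K_2>0$ (depending only on the transition probabilities) such that for all integers $h\ge1$, $m\ge 2h^2$ and $0<q<h$, \[ P_q\big(X_n\in(0,h)\text{ for all } n\le m\big)\le e^{-K_2m/h^2}. \]
   Context: Let $\{X_n\}_{n\ge0}$ be a Markov chain on $\mathbb{Z}_+=\{0,1,2,\dots\}$ with steps $\pm1$, reflecting at $0$, and for $x\ge1$ transition probabilities $p_x=p(x,x+1)$, $q_x=p(x,x-1)=1-p_x$. A drift parameter $\delta\ge-1$ is fixed and $R_x$ is defined by $p_x=\frac12\left(1-\frac{\delta}{2x}+\frac{R_x}{2}\right)$, where $R_x=o(1/x)$ as $x\to\infty$. Uniform ellipticity: there is $\epsilon>0$ with $p_x,q_x\in[\epsilon,1-\epsilon]$ for all $x\ge1$. The walk is assumed recurrent (for $\delta>-1$ this is automatic). $P_q$ denotes the law of the chain started at $q$. *)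

theory Defs
  imports "HOL-Analysis.Analysis" "HOL-Library.Landau_Symbols"
begin

text \<open>Nearest-neighbour walk on the nonnegative integers, reflecting at 0:
  from 0 it moves to 1 with probability 1; from x \<ge> 1 it moves to x+1 with
  probability p x and to x-1 with probability 1 - p x.\<close>

text \<open>stay_prob p A m x = P_x(X_n \<in> A for all n \<le> m), computed by the Markov
  property (first-step decomposition) of the walk.\<close>
fun stay_prob :: "(nat \<Rightarrow> real) \<Rightarrow> nat set \<Rightarrow> nat \<Rightarrow> nat \<Rightarrow> real" where
  "stay_prob p A 0 x = (if x \<in> A then 1 else 0)"
| "stay_prob p A (Suc m) x =
     (if x \<in> A then
        (if x = 0 then stay_prob p A m 1
         else p x * stay_prob p A m (Suc x) + (1 - p x) * stay_prob p A m (x - 1))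
      else 0)"

text \<open>hit0_prob p m x = P_x(X_n = 0 for some n \<le> m).\<close>
fun hit0_prob :: "(nat \<Rightarrow> real) \<Rightarrow> nat \<Rightarrow> nat \<Rightarrow> real" where
  "hit0_prob p 0 x = (if x = 0 then 1 else 0)"
| "hit0_prob p (Suc m) x =
     (if x = 0 then 1
      else p x * hit0_prob p m (Suc x) + (1 - p x) * hit0_prob p m (x - 1))"

text \<open>Recurrence: starting from 0 the walk returns to 0 almost surely.
  Since the first step from 0 goes to 1, this means P_1(hit 0 eventually) = 1.\<close>
definition recurrent_walk :: "(nat \<Rightarrow> real) \<Rightarrow> bool" where
  "recurrent_walk p \<longleftrightarrow> (\<lambda>m. hit0_prob p m 1) \<longlonglongrightarrow> 1"

end

theory Submission
  imports Defs
begin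

text \<open>While the walk stays in \<open>(0, h)\<close>, a function \<open>F \<ge> 0\<close> with \<open>\<theta> F \<le> P F\<close> on \<open>(0, h)\<close>
  makes \<open>\<theta>\<^sup>-\<^sup>n F(X\<^sub>n)\<close> a submartingale; as \<open>F\<close> is bounded above and below on \<open>[0, h]\<close>, surviving
  \<open>n\<close> steps then has probability bounded away from 1 as soon as \<open>\<theta>\<^sup>n\<close> is large.  With
  \<open>\<theta> = 1 + (\<kappa>/h)\<^sup>2/4\<close> and \<open>n = 2h\<^sup>2\<close> this works for \<open>F = cosh(\<kappa>x/h)\<close> when the drift towards 0
  is at most \<open>1/(8x)\<close>, and for \<open>F = exp(-\<kappa>x/h)\<close> when the drift points towards 0 (the two cases
  \<open>\<delta> \<le> 0\<close> and \<open>\<delta> > 0\<close>).  Both only hold away from a neighbourhood of 0, which is absorbed by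
  adding a geometric boundary layer \<open>K (\<epsilon>/4)\<^sup>x\<close>.  Short intervals are handled by ellipticity
  (\<open>h\<close> upward steps exit), and the Markov property turns a uniform bound \<open>\<rho> < 1\<close> on blocks of
  length at most \<open>2h\<^sup>2\<close> into \<open>exp (-K m/h\<^sup>2)\<close>.\<close>

text \<open>Meaningful only for \<open>x \<ge> 1\<close>: from 0 the walk steps to 1 deterministically.\<close>

definition step_mean :: "(nat \<Rightarrow> real) \<Rightarrow> (nat \<Rightarrow> real) \<Rightarrow> nat \<Rightarrow> real" where
  "step_mean p F x = p x * F (Suc x) + (1 - p x) * F (x - 1)"

lemma step_mean_const [simp]: "step_mean p (\<lambda>_. c) x = c"
  by (simp add: step_mean_def algebra_simps)

lemma step_mean_cmult: "step_mean p (\<lambda>y. c * F y) x = c * step_mean p F x"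
  by (simp add: step_mean_def algebra_simps)

lemma step_mean_add: "step_mean p (\<lambda>y. F y + G y) x = step_mean p F x + step_mean p G x"
  by (simp add: step_mean_def algebra_simps)

lemma step_mean_mono:
  assumes "0 \<le> p x" "p x \<le> 1" "F (Suc x) \<le> G (Suc x)" "F (x - 1) \<le> G (x - 1)"
  shows "step_mean p F x \<le> step_mean p G x"
  unfolding step_mean_def using assms by (intro add_mono mult_left_mono) auto

lemma stay_prob_outside: "x \<notin> A \<Longrightarrow> stay_prob p A n x = 0"
  by (cases n) auto

lemma stay_prob_Suc_step_mean:
  "x \<in> A \<Longrightarrow> 0 < x \<Longrightarrow> stay_prob p A (Suc n) x = step_mean p (stay_prob p A n) x"
  by (simp add: step_mean_def)

context
  fixes p :: "nat \<Rightarrow> real"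
  assumes p_nonneg: "\<And>x. 0 < x \<Longrightarrow> 0 \<le> p x" and p_le_one: "\<And>x. 0 < x \<Longrightarrow> p x \<le> 1"
begin

lemma stay_prob_nonneg_le_one: "0 \<le> stay_prob p A n x \<and> stay_prob p A n x \<le> 1"
proof (induction n arbitrary: x)
  case 0
  show ?case by simp
next
  case (Suc n)
  consider "x \<notin> A" | "x \<in> A" "x = 0" | "x \<in> A" "0 < x" by blast
  then show ?case
  proof cases
    case 3
    have "step_mean p (\<lambda>_. 0) x \<le> step_mean p (stay_prob p A n) x"
      and "step_mean p (stay_prob p A n) x \<le> step_mean p (\<lambda>_. 1) x"
      using Suc.IH p_nonneg[OF 3(2)] p_le_one[OF 3(2)] by (intro step_mean_mono; simp)+
    then show ?thesis unfolding stay_prob_Suc_step_mean[OF 3] by simp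
  qed (use Suc.IH in \<open>auto simp: stay_prob_outside\<close>)
qed

lemma stay_prob_add_le:
  assumes "\<And>y. stay_prob p A b y \<le> M"
  shows "stay_prob p A (a + b) x \<le> M * stay_prob p A a x"
proof (induction a arbitrary: x)
  case 0
  show ?case using assms by (cases "x \<in> A") (auto simp: stay_prob_outside)
next
  case (Suc a)
  consider "x \<notin> A" | "x \<in> A" "x = 0" | "x \<in> A" "0 < x" by blast
  then show ?case
  proof cases
    case 3
    have "stay_prob p A (Suc a + b) x = step_mean p (stay_prob p A (a + b)) x"
      using 3 by (simp add: step_mean_def)
    also have "\<dots> \<le> step_mean p (\<lambda>y. M * stay_prob p A a y) x"
      using Suc.IH p_nonneg[OF 3(2)] p_le_one[OF 3(2)] by (intro step_mean_mono) auto
    also have "\<dots> = M * stay_prob p A (Suc a) x"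
      unfolding stay_prob_Suc_step_mean[OF 3] by (rule step_mean_cmult)
    finally show ?thesis .
  qed (use Suc.IH in \<open>auto simp: stay_prob_outside\<close>)
qed

lemma stay_prob_antimono: "a \<le> c \<Longrightarrow> stay_prob p A c x \<le> stay_prob p A a x"
  using stay_prob_add_le[of A "c - a" 1 a x] stay_prob_nonneg_le_one by simp

lemma stay_prob_mult_le_power:
  assumes "\<And>y. stay_prob p A b y \<le> M"
  shows "stay_prob p A (j * b) x \<le> M ^ j"
proof (induction j arbitrary: x)
  case 0
  show ?case using stay_prob_nonneg_le_one by simp
next
  case (Suc j)
  have "0 \<le> M" using assms[of 0] stay_prob_nonneg_le_one[of A b 0] by linarith
  have "stay_prob p A (j * b + b) x \<le> M * stay_prob p A (j * b) x"
    by (rule stay_prob_add_le[OF assms])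
  also have "\<dots> \<le> M * M ^ j" using Suc.IH \<open>0 \<le> M\<close> by (intro mult_left_mono)
  finally show ?case by (simp add: add.commute)
qed

lemma stay_prob_interval_le_one_minus_pow:
  assumes "\<And>x. 0 < x \<Longrightarrow> \<epsilon> \<le> p x" and "0 \<le> \<epsilon>"
  shows "h \<le> x + n \<Longrightarrow> stay_prob p {0<..<h} n x \<le> 1 - \<epsilon> ^ n"
proof (induction n arbitrary: x)
  case 0
  then show ?case by (simp add: stay_prob_outside)
next
  case (Suc n)
  show ?case
  proof (cases "x \<in> {0<..<h}")
    case True
    then have x: "0 < x" by simp
    have "stay_prob p {0<..<h} (Suc n) x \<le> step_mean p (\<lambda>y. if y = Suc x then 1 - \<epsilon> ^ n else 1) x"
      unfolding stay_prob_Suc_step_mean[OF True x] using Suc stay_prob_nonneg_le_one p_nonneg[OF x] p_le_one[OF x]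
      by (intro step_mean_mono) auto
    also have "\<dots> = 1 - p x * \<epsilon> ^ n" by (simp add: step_mean_def algebra_simps)
    also have "\<dots> \<le> 1 - \<epsilon> ^ Suc n" using assms x by (simp add: mult_right_mono)
    finally show ?thesis .
  next
    case False
    have "\<epsilon> \<le> 1" using assms(1)[of 1] p_le_one[of 1] by simp
    then have "\<epsilon> ^ Suc n \<le> 1" using power_le_one[OF assms(2)] by blast
    then show ?thesis unfolding stay_prob_outside[OF False] by simp
  qed
qed

text \<open>Up to the exit time \<open>\<tau>\<close>, \<open>\<theta>\<^sup>-\<^sup>n F(X\<^sub>n)\<close> is a submartingale, hence
  \<open>F x \<le> \<theta>\<^sup>-\<^sup>n Fmax P(\<tau> > n) + Fmax P(\<tau> \<le> n)\<close>.\<close>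

lemma stay_prob_growth_bound:
  assumes "1 \<le> \<theta>" and F_le: "\<And>x. x \<le> h \<Longrightarrow> F x \<le> Fmax" and "0 \<le> Fmax"
    and growth: "\<And>x. 0 < x \<Longrightarrow> x < h \<Longrightarrow> \<theta> * F x \<le> step_mean p F x"
  shows "x \<le> h \<Longrightarrow> F x \<le> Fmax * (1 - (1 - 1 / \<theta> ^ n) * stay_prob p {0<..<h} n x)"
proof (induction n arbitrary: x)
  case 0
  then show ?case using F_le by (simp add: stay_prob_outside)
next
  case (Suc n)
  show ?case
  proof (cases "x \<in> {0<..<h}")
    case True
    then have x: "0 < x" "x < h" by auto
    define c where "c = 1 - 1 / \<theta> ^ n"
    define s where "s = stay_prob p {0<..<h} (Suc n) x"
    have "\<theta> * F x \<le> step_mean p F x" using growth x .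
    also have "\<dots> \<le> step_mean p (\<lambda>y. Fmax * (1 - c * stay_prob p {0<..<h} n y)) x"
      using Suc.IH x p_nonneg[OF x(1)] p_le_one[OF x(1)] unfolding c_def by (intro step_mean_mono) auto
    also have "\<dots> = Fmax * (1 - c * s)"
      unfolding s_def stay_prob_Suc_step_mean[OF True x(1)] by (simp add: step_mean_def algebra_simps)
    also have "\<dots> \<le> \<theta> * (Fmax * (1 - (1 - 1 / \<theta> ^ Suc n) * s))"
    proof -
      have "s \<le> 1" unfolding s_def using stay_prob_nonneg_le_one by blast
      then have "0 \<le> (\<theta> - 1) * (1 - s) * Fmax" using \<open>1 \<le> \<theta>\<close> \<open>0 \<le> Fmax\<close> by simp
      also have "\<dots> = \<theta> * (Fmax * (1 - (1 - 1 / \<theta> ^ Suc n) * s)) - Fmax * (1 - c * s)"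
        using \<open>1 \<le> \<theta>\<close> unfolding c_def by (simp add: field_simps)
      finally show ?thesis by simp
    qed
    finally show ?thesis using \<open>1 \<le> \<theta>\<close> unfolding s_def by simp
  next
    case False
    then show ?thesis unfolding stay_prob_outside[OF False] using F_le Suc.prems by simp
  qed
qed

lemma stay_prob_le_of_growth:
  assumes "1 \<le> \<theta>" and F_bounds: "\<And>x. x \<le> h \<Longrightarrow> a \<le> F x \<and> F x \<le> Fmax" and "0 < a"
    and growth: "\<And>x. 0 < x \<Longrightarrow> x < h \<Longrightarrow> \<theta> * F x \<le> step_mean p F x"
    and \<theta>_large: "2 * Fmax / a \<le> \<theta> ^ n"
  shows "stay_prob p {0<..<h} n x \<le> 1 - a / (2 * Fmax)"
proof -
  define r where "r = a / (2 * Fmax)"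
  define s where "s = stay_prob p {0<..<h} n x"
  have "a \<le> Fmax" using F_bounds[of 0] by simp
  then have r: "0 < r" "r \<le> 1/2" and "0 < Fmax" using \<open>0 < a\<close> by (auto simp: r_def field_simps)
  have "0 < \<theta> ^ n" using \<open>1 \<le> \<theta>\<close> by simp
  then have "1 / \<theta> ^ n \<le> r"
    using \<theta>_large \<open>0 < a\<close> \<open>0 < Fmax\<close> unfolding r_def by (simp add: field_simps)
  show ?thesis
  proof (cases "x \<le> h")
    case True
    have "F x \<le> Fmax * (1 - (1 - 1 / \<theta> ^ n) * s)"
      unfolding s_def using F_bounds \<open>a \<le> Fmax\<close> \<open>0 < a\<close>
      by (intro stay_prob_growth_bound[OF \<open>1 \<le> \<theta>\<close> _ _ growth True]) auto
    then have "a \<le> Fmax * (1 - (1 - 1 / \<theta> ^ n) * s)"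
      using F_bounds[OF True] by linarith
    then have "2 * r \<le> 1 - (1 - 1 / \<theta> ^ n) * s"
      using \<open>0 < a\<close> \<open>a \<le> Fmax\<close> unfolding r_def by (simp add: field_simps)
    moreover have "(1 - r) * s \<le> (1 - 1 / \<theta> ^ n) * s"
      using \<open>1 / \<theta> ^ n \<le> r\<close> stay_prob_nonneg_le_one unfolding s_def by (intro mult_right_mono) auto
    moreover have "1 - 2 * r \<le> (1 - r) * (1 - r)"
      by (simp add: algebra_simps)
    ultimately have "(1 - r) * s \<le> (1 - r) * (1 - r)"
      by linarith
    then show ?thesis using r unfolding r_def[symmetric] s_def[symmetric] by simp
  next
    case False
    then have "x \<notin> {0<..<h}" by simp
    then show ?thesis using r by (simp add: r_def[symmetric] stay_prob_outside)
  qed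
qed

end

lemma growth_add_boundary_layer:
  fixes p f :: "nat \<Rightarrow> real"
  assumes p_bounds: "\<And>x. 0 < x \<Longrightarrow> \<epsilon> \<le> p x \<and> p x \<le> 1 - \<epsilon>" and "0 < \<epsilon>" and "\<theta> \<le> 2"
    and f_bounds: "\<And>x. x \<le> h \<Longrightarrow> 0 \<le> f x \<and> f x \<le> B"
    and growth: "\<And>x. N \<le> x \<Longrightarrow> 0 < x \<Longrightarrow> x < h \<Longrightarrow> \<theta> * f x \<le> step_mean p f x"
    and x: "0 < x" "x < h"
  defines "g \<equiv> \<lambda>y. B * (4 / \<epsilon>) ^ N * (\<epsilon> / 4) ^ y"
  shows "\<theta> * (f x + g x) \<le> step_mean p (\<lambda>y. f y + g y) x"
proof -
  have p: "\<epsilon> \<le> p x" "p x \<le> 1 - \<epsilon>" using p_bounds x by auto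
  have "\<epsilon> \<le> 1/2" using p_bounds[of 1] by simp
  have "0 \<le> B" using f_bounds[of 0] by simp
  then have g_nonneg: "0 \<le> g y" for y using \<open>0 < \<epsilon>\<close> unfolding g_def by simp
  have f_step: "0 \<le> step_mean p f x"
    using f_bounds[of "Suc x"] f_bounds[of "x - 1"] x p \<open>0 < \<epsilon>\<close> unfolding step_mean_def by simp
  \<comment> \<open>one step down multiplies \<open>g\<close> by \<open>4 / \<epsilon>\<close> and has probability at least \<open>\<epsilon>\<close>\<close>
  have g_step: "4 * g x \<le> step_mean p g x"
  proof -
    have "g x = \<epsilon> / 4 * g (x - 1)"
      using x unfolding g_def by (cases x) (simp_all add: algebra_simps)
    then have "4 * g x \<le> (1 - p x) * g (x - 1)"
      using mult_right_mono[of \<epsilon> "1 - p x" "g (x - 1)"] p g_nonneg[of "x - 1"] by simp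
    also have "\<dots> \<le> step_mean p g x"
      using p g_nonneg[of "Suc x"] \<open>0 < \<epsilon>\<close> unfolding step_mean_def by simp
    finally show ?thesis .
  qed
  show ?thesis
  proof (cases "N \<le> x")
    case True
    have "\<theta> * g x \<le> 4 * g x" using \<open>\<theta> \<le> 2\<close> g_nonneg[of x] by (simp add: mult_right_mono)
    then show ?thesis using growth[OF True x] g_step by (simp add: step_mean_add algebra_simps)
  next
    case False
    have "g x = B * (4 / \<epsilon>) ^ (N - x)"
      using False \<open>0 < \<epsilon>\<close> unfolding g_def by (simp add: power_diff field_simps)
    moreover have "1 \<le> (4 / \<epsilon>) ^ (N - x)"
      using \<open>0 < \<epsilon>\<close> \<open>\<epsilon> \<le> 1/2\<close> by (intro one_le_power) (simp add: field_simps)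
    ultimately have "B \<le> g x" using mult_left_mono[of 1 _ B] \<open>0 \<le> B\<close> by simp
    moreover have "0 \<le> f x" "f x \<le> B" using f_bounds[of x] x by auto
    ultimately have "\<theta> * (f x + g x) \<le> 2 * (f x + g x)"
      using \<open>\<theta> \<le> 2\<close> g_nonneg[of x] by (intro mult_right_mono) auto
    also have "\<dots> \<le> 4 * g x" using \<open>B \<le> g x\<close> \<open>f x \<le> B\<close> by simp
    finally show ?thesis using f_step g_step by (simp add: step_mean_add)
  qed
qed

lemma one_plus_half_sq_le_cosh:
  fixes u :: real
  assumes "0 \<le> u"
  shows "1 + u^2 / 2 \<le> cosh u"
proof -
  have "(\<lambda>t. cosh t - t^2 / 2) 0 \<le> (\<lambda>t. cosh t - t^2 / 2) u"
  proof (rule DERIV_nonneg_imp_nondecreasing[OF assms])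
    fix t :: real
    assume "0 \<le> t"
    have "((\<lambda>t. cosh t - t^2 / 2) has_real_derivative (sinh t - t)) (at t)"
      by (rule derivative_eq_intros refl | simp)+
    moreover have "t \<le> sinh t"
      using real_le_x_sinh[of t] \<open>0 \<le> t\<close> by (simp add: sinh_field_def exp_minus)
    ultimately show "\<exists>y. ((\<lambda>t. cosh t - t^2 / 2) has_real_derivative y) (at t) \<and> 0 \<le> y"
      by force
  qed
  then show ?thesis by simp
qed

lemma sinh_le_mult_cosh:
  fixes a :: real
  assumes "0 \<le> a"
  shows "sinh a \<le> a * cosh a"
proof -
  have "(\<lambda>t. t * cosh t - sinh t) 0 \<le> (\<lambda>t. t * cosh t - sinh t) a"
  proof (rule DERIV_nonneg_imp_nondecreasing[OF assms])
    fix t :: real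
    assume "0 \<le> t"
    have "((\<lambda>t. t * cosh t - sinh t) has_real_derivative (t * sinh t)) (at t)"
      by (rule derivative_eq_intros refl | simp)+
    with \<open>0 \<le> t\<close> show "\<exists>y. ((\<lambda>t. t * cosh t - sinh t) has_real_derivative y) (at t) \<and> 0 \<le> y"
      by force
  qed
  then show ?thesis by simp
qed

lemma sinh_le_two_mult:
  fixes u :: real
  assumes "0 \<le> u" "u \<le> 1"
  shows "sinh u \<le> 2 * u"
proof -
  have "exp (1::real) \<le> 3" and "exp (-1::real) \<le> 1" using exp_le by simp_all
  then have "cosh (1::real) \<le> 2" by (simp add: cosh_field_def del: exp_le_one_iff)
  moreover have "cosh u \<le> cosh 1" using assms by (simp add: cosh_real_nonneg_le_iff)
  ultimately have "u * cosh u \<le> u * 2" using assms(1) by (intro mult_left_mono) auto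
  then show ?thesis using sinh_le_mult_cosh[OF assms(1)] by simp
qed

lemma exp_le_one_plus_power:
  fixes v :: real
  assumes "0 \<le> v" "v \<le> 1/4"
  shows "exp (3/4 * v * n) \<le> (1 + v) ^ n"
proof -
  have "v * v \<le> v * (1/4)" using assms by (intro mult_left_mono)
  then have "3/4 * v \<le> v - v^2" by (simp add: power2_eq_square)
  also have "\<dots> \<le> ln (1 + v)" using assms by (intro ln_one_plus_pos_lower_bound) auto
  finally have "exp (3/4 * v) \<le> exp (ln (1 + v))" by simp
  then have "exp (3/4 * v) \<le> 1 + v" using assms by simp
  then have "exp (3/4 * v) ^ n \<le> (1 + v) ^ n" by (intro power_mono) auto
  then show ?thesis by (simp add: exp_of_nat_mult[symmetric] mult.commute)
qed

lemma cosh_mean_ge: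
  fixes a u q :: real
  assumes "0 \<le> a" "0 \<le> u" "u \<le> 1" and drift: "8 * a * (1 - 2 * q) \<le> u"
  shows "(1 + u^2 / 4) * cosh a \<le> q * cosh (a + u) + (1 - q) * cosh (a - u)"
proof -
  have sinh_prod: "0 \<le> sinh a * sinh u" using assms by simp
  have "(1 - 2 * q) * (sinh a * sinh u) \<le> u^2 / 4 * cosh a"
  proof (cases "q \<le> 1/2")
    case True
    have "(1 - 2 * q) * (sinh a * sinh u) \<le> (1 - 2 * q) * ((a * cosh a) * (2 * u))"
      using True assms sinh_le_mult_cosh sinh_le_two_mult by (intro mult_left_mono mult_mono) auto
    also have "\<dots> = u * (8 * a * (1 - 2 * q)) * cosh a / 4" by (simp add: algebra_simps)
    also have "\<dots> \<le> u * u * cosh a / 4"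
      using drift assms by (intro divide_right_mono mult_right_mono mult_left_mono) auto
    finally show ?thesis by (simp add: power2_eq_square)
  next
    case False
    then have "(1 - 2 * q) * (sinh a * sinh u) \<le> 0" using sinh_prod by (simp add: mult_nonpos_nonneg)
    moreover have "0 \<le> u^2 / 4 * cosh a" by simp
    ultimately show ?thesis by linarith
  qed
  moreover have "(1 + u^2 / 2) * cosh a \<le> cosh u * cosh a"
    using one_plus_half_sq_le_cosh[OF assms(2)] by (intro mult_right_mono) auto
  ultimately show ?thesis by (simp add: cosh_add cosh_diff algebra_simps)
qed

lemma exp_mean_ge:
  fixes a u q :: real
  assumes "0 \<le> u" "q \<le> 1/2"
  shows "(1 + u^2 / 4) * exp (- a) \<le> q * exp (- (a + u)) + (1 - q) * exp (- (a - u))"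
proof -
  have "q * exp (- (a + u)) + (1 - q) * exp (- (a - u)) = exp (- a) * (cosh u + (1 - 2 * q) * sinh u)"
    by (simp add: exp_add exp_diff cosh_field_def sinh_field_def exp_minus field_simps)
  moreover have "1 + u^2 / 4 \<le> cosh u + (1 - 2 * q) * sinh u"
  proof -
    have "0 \<le> (1 - 2 * q) * sinh u" using assms by simp
    then show ?thesis using one_plus_half_sq_le_cosh[OF assms(1)] zero_le_power2[of u] by linarith
  qed
  ultimately show ?thesis by simp
qed

lemma stay_prob_large_interval:
  fixes p :: "nat \<Rightarrow> real" and f :: "real \<Rightarrow> nat \<Rightarrow> nat \<Rightarrow> real"
  assumes p_bounds: "\<And>x. 0 < x \<Longrightarrow> \<epsilon> \<le> p x \<and> p x \<le> 1 - \<epsilon>" and "0 < \<epsilon>"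
    and f_bounds: "\<And>\<kappa> h x. 0 < \<kappa> \<Longrightarrow> \<kappa> \<le> real h \<Longrightarrow> x \<le> h \<Longrightarrow>
        exp (- \<kappa>) \<le> f \<kappa> h x \<and> f \<kappa> h x \<le> exp \<kappa>"
    and growth: "\<And>\<kappa> h x. 0 < \<kappa> \<Longrightarrow> \<kappa> \<le> real h \<Longrightarrow> N \<le> x \<Longrightarrow> 0 < x \<Longrightarrow> x < h \<Longrightarrow>
        (1 + (\<kappa> / real h)^2 / 4) * f \<kappa> h x \<le> step_mean p (f \<kappa> h) x"
  shows "\<exists>\<rho> < 1. \<exists>H. \<forall>h y. H \<le> real h \<longrightarrow> stay_prob p {0<..<h} (2 * h^2) y \<le> \<rho>"
proof -
  have p_nonneg: "0 \<le> p x" and p_le_one: "p x \<le> 1" if "0 < x" for x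
    using p_bounds[OF that] \<open>0 < \<epsilon>\<close> by auto
  define C where "C = (4 / \<epsilon>) ^ N"
  \<comment> \<open>large enough that \<open>\<theta> ^ (2 h\<^sup>2) \<ge> exp (3\<kappa>\<^sup>2/8)\<close> beats \<open>2 Fmax / Fmin = 2 exp (2\<kappa>) (1 + C)\<close>\<close>
  define \<kappa> where "\<kappa> = max 8 (ln (1 + C) + 1)"
  define \<rho> where "\<rho> = 1 - exp (- \<kappa>) / (2 * (exp \<kappa> * (1 + C)))"
  have "0 \<le> C" using \<open>0 < \<epsilon>\<close> unfolding C_def by simp
  have "8 \<le> \<kappa>" "ln (1 + C) + 1 \<le> \<kappa>" unfolding \<kappa>_def by auto
  have "stay_prob p {0<..<h} (2 * h^2) y \<le> \<rho>" if "\<kappa> \<le> real h" for h y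
  proof -
    define \<theta> where "\<theta> = 1 + (\<kappa> / real h)^2 / 4"
    define F where "F x = f \<kappa> h x + exp \<kappa> * C * (\<epsilon> / 4) ^ x" for x
    have "0 < \<kappa>" "0 < real h" using \<open>8 \<le> \<kappa>\<close> that by auto
    then have "(\<kappa> / real h)^2 \<le> 1" using that by (simp add: power_le_one)
    then have \<theta>: "1 \<le> \<theta>" "\<theta> \<le> 2" unfolding \<theta>_def by auto
    have f_bounds': "exp (- \<kappa>) \<le> f \<kappa> h x \<and> f \<kappa> h x \<le> exp \<kappa>" if "x \<le> h" for x
      using f_bounds[OF \<open>0 < \<kappa>\<close> \<open>\<kappa> \<le> real h\<close> that] .
    have F_growth: "\<theta> * F x \<le> step_mean p F x" if "0 < x" "x < h" for x
      unfolding F_def C_def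
    proof (rule growth_add_boundary_layer[OF p_bounds \<open>0 < \<epsilon>\<close> \<open>\<theta> \<le> 2\<close> _ _ that])
      show "0 \<le> f \<kappa> h x \<and> f \<kappa> h x \<le> exp \<kappa>" if "x \<le> h" for x
        using f_bounds'[OF that] by (meson exp_ge_zero order_trans)
      show "\<theta> * f \<kappa> h x \<le> step_mean p (f \<kappa> h) x" if "N \<le> x" "0 < x" "x < h" for x
        unfolding \<theta>_def using growth[OF \<open>0 < \<kappa>\<close> \<open>\<kappa> \<le> real h\<close> that] .
    qed
    have F_bounds: "exp (- \<kappa>) \<le> F x \<and> F x \<le> exp \<kappa> * (1 + C)" if "x \<le> h" for x
    proof -
      have "0 \<le> exp \<kappa> * C * (\<epsilon> / 4) ^ x" "exp \<kappa> * C * (\<epsilon> / 4) ^ x \<le> exp \<kappa> * C"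
        using \<open>0 \<le> C\<close> \<open>0 < \<epsilon>\<close> p_bounds[of 1] by (auto intro!: mult_left_le power_le_one)
      moreover have "exp \<kappa> * (1 + C) = exp \<kappa> + exp \<kappa> * C" by (simp add: algebra_simps)
      ultimately show ?thesis using f_bounds'[OF that] unfolding F_def by linarith
    qed
    have "exp (ln (1 + C) + \<kappa> + \<kappa>) = (1 + C) * exp \<kappa> * exp \<kappa>"
      unfolding exp_add using \<open>0 \<le> C\<close> by simp
    then have "2 * (exp \<kappa> * (1 + C)) / exp (- \<kappa>) = 2 * exp (ln (1 + C) + \<kappa> + \<kappa>)"
      by (simp add: exp_minus divide_inverse)
    also have "\<dots> \<le> exp (1 + ln (1 + C) + \<kappa> + \<kappa>)"
      using exp_ge_add_one_self[of 1] by (simp add: exp_add)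
    also have "\<dots> \<le> exp (3/8 * \<kappa>^2)"
    proof -
      have "8 * \<kappa> \<le> \<kappa> * \<kappa>" using \<open>8 \<le> \<kappa>\<close> by (intro mult_right_mono) auto
      then show ?thesis using \<open>ln (1 + C) + 1 \<le> \<kappa>\<close> by (simp add: power2_eq_square)
    qed
    also have "\<dots> = exp (3/4 * ((\<kappa> / real h)^2 / 4) * real (2 * h^2))"
      using \<open>0 < real h\<close> by (simp add: field_simps)
    also have "\<dots> \<le> \<theta> ^ (2 * h^2)"
      unfolding \<theta>_def using \<open>(\<kappa> / real h)^2 \<le> 1\<close> by (intro exp_le_one_plus_power) auto
    finally have \<theta>_large: "2 * (exp \<kappa> * (1 + C)) / exp (- \<kappa>) \<le> \<theta> ^ (2 * h^2)" .
    show ?thesis unfolding \<rho>_def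
      by (rule stay_prob_le_of_growth[OF p_nonneg p_le_one \<open>1 \<le> \<theta>\<close> F_bounds exp_gt_zero F_growth \<theta>_large])
        simp_all
  qed
  moreover have "\<rho> < 1" unfolding \<rho>_def using \<open>0 \<le> C\<close> by (simp add: add_pos_nonneg)
  ultimately show ?thesis by blast
qed

lemma stay_prob_large_interval_weak_inward_drift:
  fixes p :: "nat \<Rightarrow> real"
  assumes p_bounds: "\<And>x. 0 < x \<Longrightarrow> \<epsilon> \<le> p x \<and> p x \<le> 1 - \<epsilon>" and "0 < \<epsilon>"
    and drift: "eventually (\<lambda>x. 8 * real x * (1 - 2 * p x) \<le> 1) at_top"
  shows "\<exists>\<rho> < 1. \<exists>H. \<forall>h y. H \<le> real h \<longrightarrow> stay_prob p {0<..<h} (2 * h^2) y \<le> \<rho>"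
proof -
  obtain N where N: "\<And>x. N \<le> x \<Longrightarrow> 8 * real x * (1 - 2 * p x) \<le> 1"
    using drift unfolding eventually_at_top_linorder by blast
  show ?thesis
  proof (rule stay_prob_large_interval[OF p_bounds \<open>0 < \<epsilon>\<close>, where f = "\<lambda>\<kappa> h x. cosh (\<kappa> * real x / real h)" and N = N])
    fix \<kappa> :: real and h x :: nat
    assume "0 < \<kappa>" "\<kappa> \<le> real h" "x \<le> h"
    then have "0 \<le> \<kappa> * real x / real h" "\<kappa> * real x / real h \<le> \<kappa>"
      by (auto simp: divide_le_eq mult_left_mono)
    then have "cosh (\<kappa> * real x / real h) \<le> cosh \<kappa>"
      using \<open>0 < \<kappa>\<close> by (simp add: cosh_real_nonneg_le_iff)
    moreover have "cosh \<kappa> \<le> exp \<kappa>" and "exp (- \<kappa>) \<le> 1"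
      using \<open>0 < \<kappa>\<close> by (simp_all add: cosh_field_def)
    ultimately show "exp (- \<kappa>) \<le> cosh (\<kappa> * real x / real h) \<and> cosh (\<kappa> * real x / real h) \<le> exp \<kappa>"
      using cosh_real_ge_1 by (meson order_trans)
  next
    fix \<kappa> :: real and h x :: nat
    assume "0 < \<kappa>" "\<kappa> \<le> real h" "N \<le> x" "0 < x" "x < h"
    define u where "u = \<kappa> / real h"
    have "0 < real h" using \<open>0 < \<kappa>\<close> \<open>\<kappa> \<le> real h\<close> by linarith
    then have u: "0 \<le> u" "u \<le> 1" using \<open>0 < \<kappa>\<close> \<open>\<kappa> \<le> real h\<close> by (auto simp: u_def)
    have a: "\<kappa> * real x / real h = real x * u" by (simp add: u_def)
    have "8 * (real x * u) * (1 - 2 * p x) = u * (8 * real x * (1 - 2 * p x))" by simp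
    also have "\<dots> \<le> u" using N[OF \<open>N \<le> x\<close>] u by (simp add: mult_left_le)
    finally have drift_x: "8 * (real x * u) * (1 - 2 * p x) \<le> u" .
    have shift: "\<kappa> * real (Suc x) / real h = real x * u + u" "\<kappa> * real (x - 1) / real h = real x * u - u"
      using \<open>0 < x\<close> by (simp_all add: u_def algebra_simps add_divide_distrib diff_divide_distrib)
    show "(1 + (\<kappa> / real h)^2 / 4) * cosh (\<kappa> * real x / real h)
        \<le> step_mean p (\<lambda>x. cosh (\<kappa> * real x / real h)) x"
      unfolding step_mean_def a shift u_def[symmetric] using u drift_x by (auto intro: cosh_mean_ge)
  qed
qed

lemma stay_prob_large_interval_inward_drift:
  fixes p :: "nat \<Rightarrow> real"
  assumes p_bounds: "\<And>x. 0 < x \<Longrightarrow> \<epsilon> \<le> p x \<and> p x \<le> 1 - \<epsilon>" and "0 < \<epsilon>"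
    and drift: "eventually (\<lambda>x. p x \<le> 1/2) at_top"
  shows "\<exists>\<rho> < 1. \<exists>H. \<forall>h y. H \<le> real h \<longrightarrow> stay_prob p {0<..<h} (2 * h^2) y \<le> \<rho>"
proof -
  obtain N where N: "\<And>x. N \<le> x \<Longrightarrow> p x \<le> 1/2"
    using drift unfolding eventually_at_top_linorder by blast
  show ?thesis
  proof (rule stay_prob_large_interval[OF p_bounds \<open>0 < \<epsilon>\<close>, where f = "\<lambda>\<kappa> h x. exp (- (\<kappa> * real x / real h))" and N = N])
    fix \<kappa> :: real and h x :: nat
    assume "0 < \<kappa>" "\<kappa> \<le> real h" "x \<le> h"
    then have "0 \<le> \<kappa> * real x / real h" "\<kappa> * real x / real h \<le> \<kappa>"
      by (auto simp: divide_le_eq mult_left_mono)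
    then show "exp (- \<kappa>) \<le> exp (- (\<kappa> * real x / real h)) \<and> exp (- (\<kappa> * real x / real h)) \<le> exp \<kappa>"
      by simp
  next
    fix \<kappa> :: real and h x :: nat
    assume "0 < \<kappa>" "\<kappa> \<le> real h" "N \<le> x" "0 < x" "x < h"
    define u where "u = \<kappa> / real h"
    have "0 \<le> u" using \<open>0 < \<kappa>\<close> by (simp add: u_def)
    have a: "\<kappa> * real x / real h = real x * u" by (simp add: u_def)
    have shift: "\<kappa> * real (Suc x) / real h = real x * u + u" "\<kappa> * real (x - 1) / real h = real x * u - u"
      using \<open>0 < x\<close> by (simp_all add: u_def algebra_simps add_divide_distrib diff_divide_distrib)
    show "(1 + (\<kappa> / real h)^2 / 4) * exp (- (\<kappa> * real x / real h))
        \<le> step_mean p (\<lambda>x. exp (- (\<kappa> * real x / real h))) x"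
      unfolding step_mean_def a shift u_def[symmetric]
      by (rule exp_mean_ge[OF \<open>0 \<le> u\<close> N[OF \<open>N \<le> x\<close>]])
  qed
qed

lemma stay_prob_blocks:
  fixes p :: "nat \<Rightarrow> real"
  assumes p_bounds: "\<And>x. 0 < x \<Longrightarrow> \<epsilon> \<le> p x \<and> p x \<le> 1 - \<epsilon>" and "0 < \<epsilon>" and "\<rho> < 1"
    and large: "\<And>h y. H \<le> real h \<Longrightarrow> stay_prob p {0<..<h} (2 * h^2) y \<le> \<rho>"
  shows "\<exists>\<rho>'. 0 < \<rho>' \<and> \<rho>' < 1 \<and>
    (\<forall>h \<ge> 1. \<exists>b \<ge> 1. real b \<le> 2 * (real h)^2 \<and> (\<forall>y. stay_prob p {0<..<h} b y \<le> \<rho>'))"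
proof -
  have p_nonneg: "0 \<le> p x" and p_le_one: "p x \<le> 1" and p_ge: "\<epsilon> \<le> p x" if "0 < x" for x
    using p_bounds[OF that] \<open>0 < \<epsilon>\<close> by auto
  have "\<epsilon> \<le> 1/2" using p_bounds[of 1] by simp
  define k where "k = Suc (nat \<lceil>H\<rceil>)"
  define \<rho>' where "\<rho>' = max \<rho> (1 - \<epsilon> ^ k)"
  have "\<epsilon> ^ k \<le> \<epsilon>" unfolding k_def using \<open>0 < \<epsilon>\<close> \<open>\<epsilon> \<le> 1/2\<close> by (simp add: power_le_one)
  have "\<rho> \<le> \<rho>'" "1 - \<epsilon> ^ k \<le> \<rho>'" unfolding \<rho>'_def by simp_all
  have "0 < \<rho>'" "\<rho>' < 1" using \<open>\<epsilon> ^ k \<le> \<epsilon>\<close> unfolding \<rho>'_def using \<open>0 < \<epsilon>\<close> \<open>\<epsilon> \<le> 1/2\<close> \<open>\<rho> < 1\<close> by auto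
  moreover have "\<exists>b \<ge> 1. real b \<le> 2 * (real h)^2 \<and> (\<forall>y. stay_prob p {0<..<h} b y \<le> \<rho>')"
    if "1 \<le> h" for h
  proof (cases "H \<le> real h")
    case True
    have "1 \<le> 2 * h^2" using that by simp
    moreover have "real (2 * h^2) \<le> 2 * (real h)^2" by simp
    moreover have "stay_prob p {0<..<h} (2 * h^2) y \<le> \<rho>'" for y
      using large[OF True, of y] \<open>\<rho> \<le> \<rho>'\<close> by linarith
    ultimately show ?thesis by blast
  next
    case False
    have "\<epsilon> ^ k \<le> \<epsilon> ^ h"
      unfolding k_def using False \<open>0 < \<epsilon>\<close> \<open>\<epsilon> \<le> 1/2\<close> by (intro power_decreasing) linarith+
    have "stay_prob p {0<..<h} h y \<le> \<rho>'" for y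
    proof -
      have "stay_prob p {0<..<h} h y \<le> 1 - \<epsilon> ^ h"
        using \<open>0 < \<epsilon>\<close> by (intro stay_prob_interval_le_one_minus_pow[OF p_nonneg p_le_one p_ge]) auto
      then show ?thesis using \<open>\<epsilon> ^ k \<le> \<epsilon> ^ h\<close> \<open>1 - \<epsilon> ^ k \<le> \<rho>'\<close> by linarith
    qed
    moreover have "real h \<le> 2 * (real h)^2" using that by (simp add: power2_eq_square)
    ultimately show ?thesis using that by blast
  qed
  ultimately show ?thesis by blast
qed

lemma stay_prob_exponential_decay:
  fixes p :: "nat \<Rightarrow> real"
  assumes p_nonneg: "\<And>x. 0 < x \<Longrightarrow> 0 \<le> p x" and p_le_one: "\<And>x. 0 < x \<Longrightarrow> p x \<le> 1"
    and "0 < \<rho>" "\<rho> < 1" and "1 \<le> b" "b \<le> m" "real b \<le> 2 * (real h)^2"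
    and block: "\<And>y. stay_prob p {0<..<h} b y \<le> \<rho>"
  shows "stay_prob p {0<..<h} m q \<le> exp (ln \<rho> / 4 * real m / (real h)^2)"
proof -
  define j where "j = m div b"
  have "j * b \<le> m" "1 \<le> j" unfolding j_def using \<open>1 \<le> b\<close> \<open>b \<le> m\<close>
    by (auto simp: div_greater_zero_iff Suc_le_eq)
  have "m < (j + 1) * b" unfolding j_def using \<open>1 \<le> b\<close> dividend_less_div_times[of b m] by (simp add: algebra_simps)
  also have "\<dots> \<le> 2 * j * b" using \<open>1 \<le> j\<close> by simp
  finally have "real m < real (2 * j * b)" by (simp only: of_nat_less_iff)
  then have "real m < 2 * real j * real b" by simp
  have "1 \<le> real b" using \<open>1 \<le> b\<close> by simp
  moreover have "0 < (real h)^2" using calculation \<open>real b \<le> 2 * (real h)^2\<close> by linarith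
  ultimately have "real m / (4 * (real h)^2) \<le> real m / (2 * real b)"
    using \<open>real b \<le> 2 * (real h)^2\<close> by (intro divide_left_mono mult_pos_pos) auto
  also have "\<dots> \<le> real j" using \<open>real m < 2 * real j * real b\<close> \<open>1 \<le> b\<close> by (simp add: divide_le_eq)
  finally have "real m / (4 * (real h)^2) \<le> real j" .
  have "stay_prob p {0<..<h} m q \<le> stay_prob p {0<..<h} (j * b) q"
    by (rule stay_prob_antimono[OF p_nonneg p_le_one \<open>j * b \<le> m\<close>])
  also have "\<dots> \<le> \<rho> ^ j" by (rule stay_prob_mult_le_power[OF p_nonneg p_le_one block])
  also have "\<dots> = exp (real j * ln \<rho>)" using \<open>0 < \<rho>\<close> by (simp add: exp_of_nat_mult)
  also have "\<dots> \<le> exp (real m / (4 * (real h)^2) * ln \<rho>)"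
    using \<open>real m / (4 * (real h)^2) \<le> real j\<close> \<open>\<rho> < 1\<close> \<open>0 < \<rho>\<close>
    by (subst exp_le_cancel_iff) (intro mult_right_mono_neg, auto)
  finally show ?thesis by (simp add: field_simps)
qed

lemma eventually_weak_inward_drift:
  fixes p R :: "nat \<Rightarrow> real"
  assumes "\<delta> \<le> 0" and p_def: "\<And>x. x \<ge> 1 \<Longrightarrow> p x = (1 - \<delta> / (2 * real x) + R x / 2) / 2"
    and R_small: "R \<in> o(\<lambda>x. 1 / real x)"
  shows "eventually (\<lambda>x. 8 * real x * (1 - 2 * p x) \<le> 1) at_top"
proof -
  have "eventually (\<lambda>x. norm (R x) \<le> 1/4 * norm (1 / real x)) at_top"
    by (rule landau_o.smallD[OF R_small]) simp
  with eventually_ge_at_top[of 1] show ?thesis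
  proof eventually_elim
    case (elim x)
    have "1 - 2 * p x = \<delta> / (2 * real x) - R x / 2" using p_def[OF \<open>1 \<le> x\<close>] by simp
    then have "8 * real x * (1 - 2 * p x) = 4 * \<delta> - 4 * (real x * R x)"
      using \<open>1 \<le> x\<close> by (simp add: field_simps)
    also have "\<dots> \<le> 4 * (real x * \<bar>R x\<bar>)"
      using \<open>\<delta> \<le> 0\<close> mult_left_mono[OF abs_ge_minus_self[of "R x"], of "real x"] by simp
    also have "\<dots> \<le> 1" using elim by (simp add: field_simps)
    finally show ?case .
  qed
qed

lemma eventually_inward_drift:
  fixes p R :: "nat \<Rightarrow> real"
  assumes "0 < \<delta>" and p_def: "\<And>x. x \<ge> 1 \<Longrightarrow> p x = (1 - \<delta> / (2 * real x) + R x / 2) / 2"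
    and R_small: "R \<in> o(\<lambda>x. 1 / real x)"
  shows "eventually (\<lambda>x. p x \<le> 1/2) at_top"
  using landau_o.smallD[OF R_small \<open>0 < \<delta>\<close>] eventually_ge_at_top[of 1]
proof eventually_elim
  case (elim x)
  then have "R x / 2 \<le> \<delta> / (2 * real x)" by (simp add: field_simps abs_le_iff)
  moreover have "2 * p x - 1 = R x / 2 - \<delta> / (2 * real x)" using p_def[OF \<open>1 \<le> x\<close>] by simp
  ultimately show ?case by linarith
qed

lemma stay_prob_large_interval_of_drift:
  fixes p R :: "nat \<Rightarrow> real"
  assumes p_def: "\<And>x. x \<ge> 1 \<Longrightarrow> p x = (1 - \<delta> / (2 * real x) + R x / 2) / 2"
    and R_small: "R \<in> o(\<lambda>x. 1 / real x)"
    and p_bounds: "\<And>x. 0 < x \<Longrightarrow> \<epsilon> \<le> p x \<and> p x \<le> 1 - \<epsilon>" and "0 < \<epsilon>"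
  shows "\<exists>\<rho> < 1. \<exists>H. \<forall>h y. H \<le> real h \<longrightarrow> stay_prob p {0<..<h} (2 * h^2) y \<le> \<rho>"
proof (cases "\<delta> \<le> 0")
  case True
  show ?thesis
    by (rule stay_prob_large_interval_weak_inward_drift[OF p_bounds \<open>0 < \<epsilon>\<close>
          eventually_weak_inward_drift[OF True p_def R_small]])
next
  case False
  then have "0 < \<delta>" by simp
  show ?thesis
    by (rule stay_prob_large_interval_inward_drift[OF p_bounds \<open>0 < \<epsilon>\<close>
          eventually_inward_drift[OF \<open>0 < \<delta>\<close> p_def R_small]])
qed

lemma stay_prob_exponential_decay_of_large_interval:
  fixes p :: "nat \<Rightarrow> real"
  assumes p_bounds: "\<And>x. 0 < x \<Longrightarrow> \<epsilon> \<le> p x \<and> p x \<le> 1 - \<epsilon>" and "0 < \<epsilon>" and "\<rho> < 1"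
    and large: "\<And>h y. H \<le> real h \<Longrightarrow> stay_prob p {0<..<h} (2 * h^2) y \<le> \<rho>"
  shows "\<exists>K > 0. \<forall>h m q. 1 \<le> h \<longrightarrow> 2 * (real h)^2 \<le> real m \<longrightarrow>
    stay_prob p {0<..<h} m q \<le> exp (- K * real m / (real h)^2)"
proof -
  have p_nonneg: "0 \<le> p x" and p_le_one: "p x \<le> 1" if "0 < x" for x
    using p_bounds[OF that] \<open>0 < \<epsilon>\<close> by auto
  obtain \<rho>' where "0 < \<rho>'" "\<rho>' < 1" and blocks:
    "\<forall>h \<ge> 1. \<exists>b \<ge> 1. real b \<le> 2 * (real h)^2 \<and> (\<forall>y. stay_prob p {0<..<h} b y \<le> \<rho>')"
    using stay_prob_blocks[OF p_bounds \<open>0 < \<epsilon>\<close> \<open>\<rho> < 1\<close> large] by blast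
  show ?thesis
  proof (intro exI[of _ "- ln \<rho>' / 4"] conjI allI impI)
    show "0 < - ln \<rho>' / 4" using \<open>0 < \<rho>'\<close> \<open>\<rho>' < 1\<close> by simp
    fix h m q :: nat
    assume "1 \<le> h" "2 * (real h)^2 \<le> real m"
    then obtain b where "1 \<le> b" "real b \<le> 2 * (real h)^2" "\<And>y. stay_prob p {0<..<h} b y \<le> \<rho>'"
      using blocks by blast
    moreover have "b \<le> m" using calculation \<open>2 * (real h)^2 \<le> real m\<close> by linarith
    ultimately have "stay_prob p {0<..<h} m q \<le> exp (ln \<rho>' / 4 * real m / (real h)^2)"
      using \<open>0 < \<rho>'\<close> \<open>\<rho>' < 1\<close> by (intro stay_prob_exponential_decay[OF p_nonneg p_le_one]) auto
    then show "stay_prob p {0<..<h} m q \<le> exp (- (- ln \<rho>' / 4) * real m / (real h)^2)" by simp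
  qed
qed

theorem lemma4p1:
  fixes p R :: "nat \<Rightarrow> real" and \<delta> \<epsilon> :: real
  assumes delta: "\<delta> \<ge> -1"
    and p_def: "\<And>x. x \<ge> 1 \<Longrightarrow> p x = (1 - \<delta> / (2 * real x) + R x / 2) / 2"
    and R_small: "R \<in> o(\<lambda>x. 1 / real x)"
    and eps: "\<epsilon> > 0" "\<And>x. x \<ge> 1 \<Longrightarrow> \<epsilon> \<le> p x \<and> p x \<le> 1 - \<epsilon>"
    and rec: "recurrent_walk p"
  shows "\<exists>K2>0. \<forall>h m q :: nat. h \<ge> 1 \<longrightarrow> real m \<ge> 2 * (real h)^2 \<longrightarrow> 0 < q \<longrightarrow> q < h \<longrightarrow>
           stay_prob p {0<..<h} m q \<le> exp (- K2 * real m / (real h)^2)"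
proof -
  have p_bounds: "\<epsilon> \<le> p x \<and> p x \<le> 1 - \<epsilon>" if "0 < x" for x
    using eps(2)[of x] that by simp
  obtain \<rho> H where "\<rho> < 1"
    and large: "\<And>h y. H \<le> real h \<Longrightarrow> stay_prob p {0<..<h} (2 * h^2) y \<le> \<rho>"
    using stay_prob_large_interval_of_drift[OF p_def R_small p_bounds eps(1)] by blast
  obtain K where "K > 0" and decay: "\<And>h m q. 1 \<le> h \<Longrightarrow> 2 * (real h)^2 \<le> real m \<Longrightarrow>
      stay_prob p {0<..<h} m q \<le> exp (- K * real m / (real h)^2)"
    using stay_prob_exponential_decay_of_large_interval[OF p_bounds eps(1) \<open>\<rho> < 1\<close> large] by blast
  show ?thesis using \<open>K > 0\<close> decay by blast
qed

end
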